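(* Let $(M,d)$ be a compact metric space, $\varphi:M\to M$ continuous, and $\{G_n\}\subset B(M)$ such that there exists $\{G^{(k)}\}\subset B(M)$ with $\lim_{k\to\infty}\limsup_{n\to\infty}n^{-1}\|G_n-S_nG^{(k)}\|_\infty=0$. Then $\lim_{k\to\infty}\limsup_{n\to\infty}n^{-1}\|G_n-k^{-1}S_nG_k\|_\infty=0$.
   Context: $B(M)$: bounded Borel real functions, $\|f\|_\infty=\sup|f|$; $S_nG=\sum_{k=0}^{n-1}G\circ\varphi^k$. *)

theory Defs
  imports "HOL-Analysis.Analysis"
begin

definition bounded_borel :: "('a::metric_space \<Rightarrow> real) \<Rightarrow> bool" where
  "bounded_borel f \<longleftrightarrow> f \<in> borel_measurable borel \<and> bounded (range f)"

definition sup_norm :: "('a \<Rightarrow> real) \<Rightarrow> real" where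
  "sup_norm f = (SUP x. \<bar>f x\<bar>)"

definition birkhoff_sum :: "('a \<Rightarrow> 'a) \<Rightarrow> nat \<Rightarrow> ('a \<Rightarrow> real) \<Rightarrow> 'a \<Rightarrow> real" where
  "birkhoff_sum \<phi> n g x = (\<Sum>k<n. g ((\<phi> ^^ k) x))"

end

theory Submission
  imports Defs
begin

text \<open>
  Fix an approximating sequence \<open>H\<close> and put \<open>\<epsilon>\<^sub>j = limsup\<^sub>n \<parallel>G\<^sub>n - S\<^sub>n H\<^sub>j\<parallel>/n\<close>.
  Since \<open>S\<^sub>n S\<^sub>k H\<close> differs from \<open>k S\<^sub>n H\<close> by at most \<open>2k\<^sup>2\<parallel>H\<parallel>\<close> (only boundary terms
  of the shifted sums survive), splitting
  \<open>G\<^sub>n - S\<^sub>n G\<^sub>k/k = (G\<^sub>n - S\<^sub>n H\<^sub>j) + (S\<^sub>n H\<^sub>j - S\<^sub>n S\<^sub>k H\<^sub>j/k) + S\<^sub>n (S\<^sub>k H\<^sub>j - G\<^sub>k)/k\<close>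
  gives \<open>limsup\<^sub>n \<parallel>G\<^sub>n - S\<^sub>n G\<^sub>k/k\<parallel>/n \<le> \<epsilon>\<^sub>j + \<parallel>G\<^sub>k - S\<^sub>k H\<^sub>j\<parallel>/k\<close>.
  Taking \<open>limsup\<^sub>k\<close> bounds the limit superior of the quantity in question by \<open>2\<epsilon>\<^sub>j\<close>,
  for every \<open>j\<close>.
\<close>

lemma bounded_borel_imp_bounded: "bounded_borel f \<Longrightarrow> bounded (range f)"
  unfolding bounded_borel_def by simp

lemma bounded_range_abs_le:
  fixes f :: "'a \<Rightarrow> real"
  assumes "bounded (range f)"
  obtains C where "\<And>x. \<bar>f x\<bar> \<le> C"
  using assms unfolding bounded_iff by auto

lemma abs_le_sup_norm:
  fixes f :: "'a \<Rightarrow> real"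
  assumes "bounded (range f)"
  shows "\<bar>f x\<bar> \<le> sup_norm f"
proof -
  obtain C where "\<And>x. \<bar>f x\<bar> \<le> C"
    using bounded_range_abs_le[OF assms] by blast
  then show ?thesis
    unfolding sup_norm_def by (intro cSUP_upper bdd_aboveI2) auto
qed

lemma sup_norm_le:
  fixes f :: "'a \<Rightarrow> real"
  assumes "\<And>x. \<bar>f x\<bar> \<le> C"
  shows "sup_norm f \<le> C"
  unfolding sup_norm_def by (rule cSUP_least) (use assms in auto)

lemma sup_norm_nonneg:
  fixes f :: "'a \<Rightarrow> real"
  shows "bounded (range f) \<Longrightarrow> 0 \<le> sup_norm f"
  using abs_le_sup_norm[of f undefined] by linarith

lemma abs_birkhoff_sum_le:
  assumes "\<And>y. \<bar>g y\<bar> \<le> C"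
  shows "\<bar>birkhoff_sum \<phi> n g x\<bar> \<le> real n * C"
proof -
  have "\<bar>birkhoff_sum \<phi> n g x\<bar> \<le> (\<Sum>i<n. \<bar>g ((\<phi> ^^ i) x)\<bar>)"
    unfolding birkhoff_sum_def by (rule sum_abs)
  also have "\<dots> \<le> (\<Sum>i<n. C)"
    by (rule sum_mono) (use assms in auto)
  finally show ?thesis by simp
qed

lemma bounded_range_birkhoff_sum:
  assumes "bounded (range g)"
  shows "bounded (range (birkhoff_sum \<phi> n g))"
proof -
  obtain C where "\<And>y. \<bar>g y\<bar> \<le> C"
    using bounded_range_abs_le[OF assms] by blast
  then show ?thesis
    unfolding bounded_iff by (auto intro: abs_birkhoff_sum_le)
qed

lemma birkhoff_sum_diff:
  "birkhoff_sum \<phi> n (\<lambda>y. f y - g y) x = birkhoff_sum \<phi> n f x - birkhoff_sum \<phi> n g x"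
  unfolding birkhoff_sum_def by (simp add: sum_subtractf)

lemma abs_sum_shift_diff_le:
  fixes f :: "nat \<Rightarrow> real"
  assumes "\<And>i. \<bar>f i\<bar> \<le> B"
  shows "\<bar>(\<Sum>i<n. f (i + j)) - (\<Sum>i<n. f i)\<bar> \<le> 2 * real j * B"
proof (induction j)
  case 0
  then show ?case by simp
next
  case (Suc j)
  have "(\<Sum>i<n. f (i + Suc j)) - (\<Sum>i<n. f (i + j)) = f (n + j) - f j"
    using sum_lessThan_telescope[of "\<lambda>i. f (i + j)" n]
    by (simp add: sum_subtractf[symmetric] add.commute)
  moreover have "\<bar>f (n + j) - f j\<bar> \<le> 2 * B"
    using assms[of "n + j"] assms[of j] by linarith
  ultimately show ?case
    using Suc.IH by (simp add: algebra_simps)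
qed

lemma birkhoff_sum_birkhoff_sum:
  "birkhoff_sum \<phi> n (birkhoff_sum \<phi> k H) x = (\<Sum>j<k. \<Sum>i<n. H ((\<phi> ^^ (i + j)) x))"
  unfolding birkhoff_sum_def by (subst sum.swap) (simp add: funpow_add add.commute)

lemma abs_birkhoff_sum_birkhoff_sum_le:
  assumes "\<And>y. \<bar>H y\<bar> \<le> B"
  shows "\<bar>birkhoff_sum \<phi> n (birkhoff_sum \<phi> k H) x - real k * birkhoff_sum \<phi> n H x\<bar>
          \<le> 2 * real k * real k * B"
proof -
  define D where "D j = (\<Sum>i<n. H ((\<phi> ^^ (i + j)) x)) - (\<Sum>i<n. H ((\<phi> ^^ i) x))" for j
  have "birkhoff_sum \<phi> n (birkhoff_sum \<phi> k H) x - real k * birkhoff_sum \<phi> n H x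
      = (\<Sum>j<k. D j)"
    unfolding birkhoff_sum_birkhoff_sum D_def by (simp add: birkhoff_sum_def sum_subtractf)
  also have "\<bar>\<dots>\<bar> \<le> (\<Sum>j<k. \<bar>D j\<bar>)"
    by (rule sum_abs)
  also have "\<dots> \<le> (\<Sum>j<k. 2 * real k * B)"
  proof (rule sum_mono)
    fix j assume "j \<in> {..<k}"
    moreover have "0 \<le> B"
      using assms[of undefined] by linarith
    ultimately have "2 * real j * B \<le> 2 * real k * B"
      by (simp add: mult_right_mono)
    then show "\<bar>D j\<bar> \<le> 2 * real k * B"
      using abs_sum_shift_diff_le[where f = "\<lambda>i. H ((\<phi> ^^ i) x)" and B = B and n = n and j = j] assms
      unfolding D_def by simp
  qed
  finally show ?thesis by simp
qed

lemma abs_diff_birkhoff_average_le: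
  assumes "\<And>y. \<bar>H y\<bar> \<le> B"
    and "\<And>y. \<bar>g y - birkhoff_sum \<phi> k H y\<bar> \<le> d"
    and "k \<ge> 1"
  shows "\<bar>f x - birkhoff_sum \<phi> n g x / real k\<bar>
     \<le> \<bar>f x - birkhoff_sum \<phi> n H x\<bar> + 2 * real k * B + real n * d / real k"
proof -
  have k: "real k > 0"
    using \<open>k \<ge> 1\<close> by simp
  have split: "f x - birkhoff_sum \<phi> n g x / real k
     = (f x - birkhoff_sum \<phi> n H x)
       + (real k * birkhoff_sum \<phi> n H x - birkhoff_sum \<phi> n (birkhoff_sum \<phi> k H) x) / real k
       + birkhoff_sum \<phi> n (\<lambda>y. birkhoff_sum \<phi> k H y - g y) x / real k"
    using k by (simp add: birkhoff_sum_diff field_simps)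
  have "\<bar>real k * birkhoff_sum \<phi> n H x - birkhoff_sum \<phi> n (birkhoff_sum \<phi> k H) x\<bar>
      \<le> 2 * real k * real k * B"
    using abs_birkhoff_sum_birkhoff_sum_le[OF assms(1)] by (simp add: abs_minus_commute)
  then have middle: "\<bar>(real k * birkhoff_sum \<phi> n H x
      - birkhoff_sum \<phi> n (birkhoff_sum \<phi> k H) x) / real k\<bar> \<le> 2 * real k * B"
    using k by (simp add: abs_divide pos_divide_le_eq mult_ac)
  have "\<bar>birkhoff_sum \<phi> n (\<lambda>y. birkhoff_sum \<phi> k H y - g y) x\<bar> \<le> real n * d"
    by (rule abs_birkhoff_sum_le) (use assms(2) in \<open>simp add: abs_minus_commute\<close>)
  then have last: "\<bar>birkhoff_sum \<phi> n (\<lambda>y. birkhoff_sum \<phi> k H y - g y) x / real k\<bar>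
      \<le> real n * d / real k"
    using k by (simp add: abs_divide divide_right_mono)
  show ?thesis
    unfolding split using middle last by linarith
qed

lemma sup_norm_diff_birkhoff_average_le:
  assumes "bounded (range f)" "bounded (range g)"
    and "\<And>y. \<bar>H y\<bar> \<le> B"
    and "k \<ge> 1"
  shows "sup_norm (\<lambda>x. f x - birkhoff_sum \<phi> n g x / real k)
     \<le> sup_norm (\<lambda>x. f x - birkhoff_sum \<phi> n H x) + 2 * real k * B
       + real n * sup_norm (\<lambda>x. g x - birkhoff_sum \<phi> k H x) / real k"
proof (rule sup_norm_le)
  have H: "bounded (range H)"
    using assms(3) unfolding bounded_iff by auto
  fix x
  have "\<bar>g y - birkhoff_sum \<phi> k H y\<bar> \<le> sup_norm (\<lambda>x. g x - birkhoff_sum \<phi> k H x)" for y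
    by (rule abs_le_sup_norm[OF bounded_minus_comp[OF assms(2) bounded_range_birkhoff_sum[OF H]]])
  then have "\<bar>f x - birkhoff_sum \<phi> n g x / real k\<bar> \<le> \<bar>f x - birkhoff_sum \<phi> n H x\<bar>
      + 2 * real k * B + real n * sup_norm (\<lambda>x. g x - birkhoff_sum \<phi> k H x) / real k"
    by (rule abs_diff_birkhoff_average_le[OF assms(3) _ assms(4)])
  moreover have "\<bar>f x - birkhoff_sum \<phi> n H x\<bar> \<le> sup_norm (\<lambda>x. f x - birkhoff_sum \<phi> n H x)"
    by (rule abs_le_sup_norm[OF bounded_minus_comp[OF assms(1) bounded_range_birkhoff_sum[OF H]]])
  ultimately show "\<bar>f x - birkhoff_sum \<phi> n g x / real k\<bar> \<le> sup_norm (\<lambda>x. f x - birkhoff_sum \<phi> n H x)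
      + 2 * real k * B + real n * sup_norm (\<lambda>x. g x - birkhoff_sum \<phi> k H x) / real k"
    by linarith
qed

lemma Limsup_le_Limsup_add_tendsto:
  fixes a b :: "nat \<Rightarrow> ereal" and c :: "nat \<Rightarrow> real"
  assumes "eventually (\<lambda>n. a n \<le> b n + ereal (c n)) sequentially"
    and "c \<longlonglongrightarrow> d"
  shows "limsup a \<le> limsup b + ereal d"
proof -
  have "limsup a \<le> limsup (\<lambda>n. b n + ereal (c n))"
    by (rule Limsup_mono) (fact assms(1))
  also have "\<dots> \<le> limsup b + limsup (\<lambda>n. ereal (c n))"
    by (rule ereal_limsup_add_mono)
  also have "limsup (\<lambda>n. ereal (c n)) = ereal d"
    using assms(2) by (intro lim_imp_Limsup) (simp_all add: tendsto_ereal)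
  finally show ?thesis .
qed

lemma Limsup_birkhoff_average_le:
  assumes "\<And>n. bounded (range (G n))"
    and "\<And>y. \<bar>H y\<bar> \<le> B"
    and "k \<ge> 1"
  shows "limsup (\<lambda>n. ereal (sup_norm (\<lambda>x. G n x - birkhoff_sum \<phi> n (G k) x / real k) / real n))
    \<le> limsup (\<lambda>n. ereal (sup_norm (\<lambda>x. G n x - birkhoff_sum \<phi> n H x) / real n))
      + ereal (sup_norm (\<lambda>x. G k x - birkhoff_sum \<phi> k H x) / real k)"
proof (rule Limsup_le_Limsup_add_tendsto)
  define e where "e = sup_norm (\<lambda>x. G k x - birkhoff_sum \<phi> k H x) / real k"
  show "(\<lambda>n. 2 * real k * B / real n + e) \<longlonglongrightarrow> e"
    using tendsto_add[OF tendsto_divide_0[OF tendsto_const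
        filterlim_at_top_imp_at_infinity[OF filterlim_real_sequentially]] tendsto_const]
    by simp
  show "\<forall>\<^sub>F n in sequentially.
      ereal (sup_norm (\<lambda>x. G n x - birkhoff_sum \<phi> n (G k) x / real k) / real n)
      \<le> ereal (sup_norm (\<lambda>x. G n x - birkhoff_sum \<phi> n H x) / real n)
        + ereal (2 * real k * B / real n + e)"
  proof (rule eventually_sequentiallyI)
    fix n :: nat assume "n \<ge> 1"
    then show "ereal (sup_norm (\<lambda>x. G n x - birkhoff_sum \<phi> n (G k) x / real k) / real n)
      \<le> ereal (sup_norm (\<lambda>x. G n x - birkhoff_sum \<phi> n H x) / real n)
        + ereal (2 * real k * B / real n + e)"
      using divide_right_mono[OF sup_norm_diff_birkhoff_average_le[where f = "G n" and g = "G k"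
          and H = H and n = n and \<phi> = \<phi>, OF assms(1) assms(1) assms(2,3)], of "real n"]
      by (simp add: e_def add_divide_distrib)
  qed
qed

lemma nonneg_tendsto_zero_if_Limsup_le:
  fixes L \<delta> :: "nat \<Rightarrow> ereal"
  assumes "\<And>k. 0 \<le> L k"
    and "\<And>j. limsup L \<le> \<delta> j"
    and "\<delta> \<longlonglongrightarrow> 0"
  shows "L \<longlonglongrightarrow> 0"
proof -
  have "limsup L \<le> 0"
    using assms(2,3) by (intro tendsto_le[OF sequentially_bot assms(3) tendsto_const]) auto
  moreover have "0 \<le> liminf L"
    by (rule Liminf_bounded) (use assms(1) in auto)
  moreover have "liminf L \<le> limsup L"
    by (rule Liminf_le_Limsup) simp
  ultimately show ?thesis
    by (intro Liminf_eq_Limsup) auto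
qed

theorem lemma6p3:
  fixes \<phi> :: "'a::metric_space \<Rightarrow> 'a"
    and G :: "nat \<Rightarrow> 'a \<Rightarrow> real"
  assumes "compact (UNIV :: 'a set)"
    and "continuous_on UNIV \<phi>"
    and "\<And>n. bounded_borel (G n)"
    and "\<exists>H :: nat \<Rightarrow> 'a \<Rightarrow> real. (\<forall>k. bounded_borel (H k)) \<and>
           ((\<lambda>k. limsup (\<lambda>n. ereal (sup_norm (\<lambda>x. G n x - birkhoff_sum \<phi> n (H k) x) / real n)))
              \<longlonglongrightarrow> 0)"
  shows "(\<lambda>k. limsup (\<lambda>n. ereal (sup_norm (\<lambda>x. G n x - birkhoff_sum \<phi> n (G k) x / real k) / real n)))
           \<longlonglongrightarrow> 0"
proof -
  obtain H :: "nat \<Rightarrow> 'a \<Rightarrow> real" where H: "\<And>j. bounded_borel (H j)"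
    and \<epsilon>_lim: "(\<lambda>j. limsup (\<lambda>n. ereal (sup_norm (\<lambda>x. G n x - birkhoff_sum \<phi> n (H j) x) / real n)))
      \<longlonglongrightarrow> 0"
    using assms(4) by blast
  define \<epsilon> where "\<epsilon> j = limsup (\<lambda>n. ereal (sup_norm (\<lambda>x. G n x - birkhoff_sum \<phi> n (H j) x) / real n))"
    for j
  define L where "L k = limsup (\<lambda>n. ereal (sup_norm (\<lambda>x. G n x - birkhoff_sum \<phi> n (G k) x / real k) / real n))"
    for k
  have G: "\<And>n. bounded (range (G n))"
    using assms(3) by (rule bounded_borel_imp_bounded)
  have "0 \<le> L k" for k
  proof -
    have "bounded (range (\<lambda>x. G n x - birkhoff_sum \<phi> n (G k) x / real k))" for n
      using bounded_minus_comp[OF G bounded_scaleR_comp[OF bounded_range_birkhoff_sum[OF G],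
            where r = "1 / real k"]]
      by simp
    then show ?thesis
      unfolding L_def by (intro le_Limsup always_eventually allI) (simp_all add: sup_norm_nonneg)
  qed
  moreover have "limsup L \<le> \<epsilon> j + \<epsilon> j" for j
  proof -
    obtain B where B: "\<And>y. \<bar>H j y\<bar> \<le> B"
      using bounded_range_abs_le[OF bounded_borel_imp_bounded[OF H]] by blast
    have "limsup L \<le> limsup (\<lambda>k. \<epsilon> j + ereal (sup_norm (\<lambda>x. G k x - birkhoff_sum \<phi> k (H j) x) / real k))"
      unfolding L_def \<epsilon>_def using Limsup_birkhoff_average_le[OF G B]
      by (intro Limsup_mono eventually_sequentiallyI)
    also have "\<dots> \<le> limsup (\<lambda>k. \<epsilon> j) + \<epsilon> j"
      unfolding \<epsilon>_def by (rule ereal_limsup_add_mono)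
    finally show ?thesis
      by (simp add: Limsup_const)
  qed
  moreover have "(\<lambda>j. \<epsilon> j + \<epsilon> j) \<longlonglongrightarrow> 0"
    using tendsto_add_ereal[OF _ _ \<epsilon>_lim \<epsilon>_lim] unfolding \<epsilon>_def by simp
  ultimately show ?thesis
    unfolding L_def by (rule nonneg_tendsto_zero_if_Limsup_le)
qed

end
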